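(* There exists $\lambda_0>0$ such that for every $\lambda\ge\lambda_0$ the function $\beta\mapsto \rho\,\phi(a)+\gamma\,\Phi(a)$ is strictly increasing on $(0,\infty)$, where $n,\rho,a,\gamma$ are the functions of $(\beta,\lambda)$ defined in the context.
   Context: $\phi$ and $\Phi$ denote the standard normal density and distribution function. For $\lambda>0$ and $\beta\ge 0$ set $n=\lambda+\beta\sqrt{\lambda}$, $\rho=\lambda/n$, $a=\sqrt{-2n(1-\rho+\ln\rho)}$ (note $1-\rho+\ln\rho\le 0$), and $\gamma=(n-\lambda)/\sqrt{n}=\beta\sqrt{\rho}$. *)

theory Defs
  imports "HOL-Probability.Probability"
begin

definition std_normal_cdf :: "real \<Rightarrow> real" where
  "std_normal_cdf x = (LINT t : {..x} | lborel. std_normal_density t)"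

definition nn :: "real \<Rightarrow> real \<Rightarrow> real" where
  "nn lam \<beta> = lam + \<beta> * sqrt lam"

definition rho :: "real \<Rightarrow> real \<Rightarrow> real" where
  "rho lam \<beta> = lam / nn lam \<beta>"

definition aa :: "real \<Rightarrow> real \<Rightarrow> real" where
  "aa lam \<beta> = sqrt (- 2 * nn lam \<beta> * (1 - rho lam \<beta> + ln (rho lam \<beta>)))"

definition gam :: "real \<Rightarrow> real \<Rightarrow> real" where
  "gam lam \<beta> = (nn lam \<beta> - lam) / sqrt (nn lam \<beta>)"

end

theory Submission
  imports Defs
begin

text \<open>Substitute \<open>L = ln (n / \<lambda>)\<close>, so that \<open>\<rho> = e\<^sup>-\<^sup>L\<close>, \<open>\<gamma> = 2\<surd>\<lambda> sinh (L/2)\<close> and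
  \<open>a\<^sup>2/2 = \<lambda> q L\<close> with the Poisson rate function \<open>q L = 1 + (L - 1) e\<^sup>L\<close>; since \<open>L\<close> increases
  with \<open>\<beta>\<close> it suffices to show that the resulting function of \<open>L \<ge> 0\<close> increases.
  As \<open>\<Phi>\<close> is monotone and \<open>\<Phi>(a) \<ge> 1/2\<close> for \<open>a \<ge> 0\<close>, its increments dominate those of
  \<open>e\<^sup>-\<^sup>L \<phi>(a) + \<surd>\<lambda> sinh (L/2)\<close>. The derivative of the latter is positive once \<open>\<lambda> \<ge> 36\<close>:
  the bound \<open>q L \<ge> L\<^sup>2/2\<close> makes its negative part at most \<open>(1 + \<surd>\<lambda>)/\<surd>(2\<pi>)\<close>,
  which \<open>\<surd>\<lambda> cosh (L/2) / 2 \<ge> \<surd>\<lambda>/2\<close> exceeds.\<close>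

lemma integrable_std_normal_density: "integrable lborel std_normal_density"
  using integrable_std_normal_moment[of 0] by simp

lemma std_normal_cdf_mono: "x \<le> y \<Longrightarrow> std_normal_cdf x \<le> std_normal_cdf y"
  unfolding std_normal_cdf_def set_lebesgue_integral_def
  by (intro integral_mono integrable_mult_indicator integrable_std_normal_density)
     (auto split: split_indicator)

lemma std_normal_cdf_0_ge_half: "std_normal_cdf 0 \<ge> 1/2"
proof -
  have even: "std_normal_density (- x) = std_normal_density x" for x
    by (simp add: std_normal_density_def)
  have symmetric: "std_normal_cdf 0 = (LBINT x : {0..}. std_normal_density x)"
    unfolding std_normal_cdf_def by (subst set_integral_reflect) (simp add: even atLeast_def)
  have "(LBINT x : {0<..}. std_normal_density x) \<le> (LBINT x : {0..}. std_normal_density x)"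
    unfolding set_lebesgue_integral_def
    by (intro integral_mono integrable_mult_indicator integrable_std_normal_density)
       (auto split: split_indicator)
  moreover have "std_normal_cdf 0 + (LBINT x : {0<..}. std_normal_density x)
      = integral\<^sup>L lborel (\<lambda>x. indicator {..0} x *\<^sub>R std_normal_density x
                                + indicator {0<..} x *\<^sub>R std_normal_density x)"
    unfolding std_normal_cdf_def set_lebesgue_integral_def
    by (rule Bochner_Integration.integral_add[symmetric];
        intro integrable_mult_indicator integrable_std_normal_density) auto
  moreover have "\<dots> = integral\<^sup>L lborel std_normal_density"
    by (intro Bochner_Integration.integral_cong) (auto split: split_indicator)
  moreover have "integral\<^sup>L lborel std_normal_density = 1"
    using integral_std_normal_moment_even[of 0] by simp
  ultimately show ?thesis
    using symmetric by linarith
qed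

lemma std_normal_cdf_ge_half: "0 \<le> x \<Longrightarrow> std_normal_cdf x \<ge> 1/2"
  using std_normal_cdf_0_ge_half std_normal_cdf_mono[of 0 x] by linarith

lemma mult_exp_neg_half_square_le_one: "x * exp (- (x\<^sup>2 / 2)) \<le> (1 :: real)"
proof -
  have "x \<le> 1 + x\<^sup>2 / 2"
    using sum_squares_ge_zero[of "x - 1" 0] by (simp add: power2_eq_square algebra_simps)
  also have "\<dots> \<le> exp (x\<^sup>2 / 2)"
    by (rule exp_ge_add_one_self)
  finally show ?thesis
    by (simp add: exp_minus field_simps)
qed

definition poisson_rate :: "real \<Rightarrow> real" where
  "poisson_rate L = 1 + (L - 1) * exp L"

lemma poisson_rate_has_real_derivative:
  "(poisson_rate has_real_derivative L * exp L) (at L)"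
  unfolding poisson_rate_def[abs_def]
  by (auto intro!: derivative_eq_intros simp: algebra_simps)

lemma poisson_rate_mono:
  "0 \<le> L1 \<Longrightarrow> L1 \<le> L2 \<Longrightarrow> poisson_rate L1 \<le> poisson_rate L2"
  by (rule DERIV_nonneg_imp_nondecreasing[of L1 L2])
     (auto intro!: exI poisson_rate_has_real_derivative)

lemma poisson_rate_ge_half_square:
  assumes "0 \<le> L"
  shows "L\<^sup>2 / 2 \<le> poisson_rate L"
proof -
  have "(\<lambda>x. poisson_rate x - x\<^sup>2 / 2) 0 \<le> (\<lambda>x. poisson_rate x - x\<^sup>2 / 2) L"
  proof (rule DERIV_nonneg_imp_nondecreasing[OF assms])
    fix x :: real
    assume "0 \<le> x"
    then have "0 \<le> x * exp x - x"
      using mult_left_mono[of 1 "exp x" x] by simp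
    moreover have "((\<lambda>x. poisson_rate x - x\<^sup>2 / 2) has_real_derivative x * exp x - x) (at x)"
      by (auto intro!: derivative_eq_intros poisson_rate_has_real_derivative)
    ultimately show "\<exists>y. ((\<lambda>x. poisson_rate x - x\<^sup>2 / 2) has_real_derivative y) (at x) \<and> 0 \<le> y"
      by blast
  qed
  then show ?thesis
    by (simp add: poisson_rate_def)
qed

lemma poisson_rate_nonneg: "0 \<le> L \<Longrightarrow> 0 \<le> poisson_rate L"
  by (rule order_trans[OF _ poisson_rate_ge_half_square]) simp_all

definition tail_profile :: "real \<Rightarrow> real \<Rightarrow> real" where
  "tail_profile lam L = exp (- L) * std_normal_density (sqrt (2 * lam * poisson_rate L))
     + 2 * sqrt lam * sinh (L / 2) * std_normal_cdf (sqrt (2 * lam * poisson_rate L))"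

definition tail_profile_minorant :: "real \<Rightarrow> real \<Rightarrow> real" where
  "tail_profile_minorant lam L = exp (- L - lam * poisson_rate L) / sqrt (2 * pi)
     + sqrt lam * sinh (L / 2)"

lemma tail_profile_eq_minorant_plus:
  assumes "0 \<le> lam" "0 \<le> L"
  shows "tail_profile lam L = tail_profile_minorant lam L
    + 2 * sqrt lam * sinh (L / 2) * (std_normal_cdf (sqrt (2 * lam * poisson_rate L)) - 1/2)"
proof -
  have "exp (- L) * std_normal_density (sqrt (2 * lam * poisson_rate L))
      = exp (- L - lam * poisson_rate L) / sqrt (2 * pi)"
    using assms by (simp add: std_normal_density_def poisson_rate_nonneg exp_diff exp_minus field_simps)
  then show ?thesis
    unfolding tail_profile_def tail_profile_minorant_def by (simp add: algebra_simps)
qed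

lemma tail_profile_minorant_has_real_derivative:
  "(tail_profile_minorant lam has_real_derivative
      sqrt lam * cosh (L / 2) / 2
      - (1 + lam * L * exp L) * exp (- L - lam * poisson_rate L) / sqrt (2 * pi)) (at L)"
proof -
  have sqrt_2pi: "sqrt (pi * 2) * (sqrt (pi * 2) * x) = pi * 2 * x" for x
    by (simp flip: mult.assoc)
  show ?thesis
    unfolding tail_profile_minorant_def[abs_def]
    by (auto intro!: derivative_eq_intros poisson_rate_has_real_derivative
        simp: field_simps sqrt_2pi)
qed

lemma tail_profile_minorant_neg_part_le:
  assumes "0 \<le> lam" "0 \<le> L"
  shows "(1 + lam * L * exp L) * exp (- L - lam * poisson_rate L) \<le> 1 + sqrt lam"
proof -
  define y where "y = sqrt lam * L"
  have rate: "exp (- lam * poisson_rate L) \<le> exp (- (y\<^sup>2 / 2))"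
    using mult_left_mono[OF poisson_rate_ge_half_square[OF assms(2)] assms(1)] assms
    by (simp add: y_def power_mult_distrib)
  have "(1 + lam * L * exp L) * exp (- L - lam * poisson_rate L)
      = (exp (- L) + lam * L) * exp (- lam * poisson_rate L)"
    by (simp add: exp_diff exp_minus field_simps)
  also have "\<dots> \<le> (1 + sqrt lam * y) * exp (- (y\<^sup>2 / 2))"
  proof (rule mult_mono[OF _ rate])
    show "exp (- L) + lam * L \<le> 1 + sqrt lam * y"
      using assms by (simp add: y_def flip: mult.assoc)
  qed (use assms in \<open>auto simp: y_def\<close>)
  also have "\<dots> \<le> 1 + sqrt lam * (y * exp (- (y\<^sup>2 / 2)))"
    by (simp add: distrib_right)
  also have "\<dots> \<le> 1 + sqrt lam"
    using mult_exp_neg_half_square_le_one[of y] assms by (simp add: mult_left_le)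
  finally show ?thesis .
qed

lemma tail_profile_minorant_derivative_pos:
  assumes "36 \<le> lam" "0 \<le> L"
  shows "0 < sqrt lam * cosh (L / 2) / 2
    - (1 + lam * L * exp L) * exp (- L - lam * poisson_rate L) / sqrt (2 * pi)"
proof -
  have "6 \<le> sqrt lam"
    using assms real_sqrt_le_mono[of 36 lam] by simp
  have "12 / 5 < sqrt (2 * pi)"
    using pi_gt3 by (intro real_less_rsqrt) (simp add: power2_eq_square)
  have "sqrt lam \<le> sqrt lam * cosh (L / 2)"
    using assms cosh_real_ge_1[of "L / 2"] by (simp add: mult_le_cancel_left1)
  have "(1 + lam * L * exp L) * exp (- L - lam * poisson_rate L) / sqrt (2 * pi)
      \<le> (1 + sqrt lam) / sqrt (2 * pi)"
    using tail_profile_minorant_neg_part_le assms by (simp add: divide_right_mono)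
  also have "\<dots> < (1 + sqrt lam) / (12 / 5)"
    using \<open>12 / 5 < sqrt (2 * pi)\<close> \<open>6 \<le> sqrt lam\<close> by (intro divide_strict_left_mono) auto
  also have "\<dots> \<le> sqrt lam * cosh (L / 2) / 2"
    using \<open>sqrt lam \<le> sqrt lam * cosh (L / 2)\<close> \<open>6 \<le> sqrt lam\<close> by simp
  finally show ?thesis
    by simp
qed

lemma tail_profile_minorant_strict_mono_on:
  assumes "36 \<le> lam"
  shows "strict_mono_on {0..} (tail_profile_minorant lam)"
proof (rule strict_mono_onI)
  fix L1 L2 :: real
  assume "L1 \<in> {0..}" "L2 \<in> {0..}" "L1 < L2"
  show "tail_profile_minorant lam L1 < tail_profile_minorant lam L2"
  proof (rule DERIV_pos_imp_increasing[OF \<open>L1 < L2\<close>])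
    fix L :: real
    assume "L1 \<le> L"
    with \<open>L1 \<in> {0..}\<close> have "0 \<le> L"
      by simp
    then show "\<exists>y. (tail_profile_minorant lam has_real_derivative y) (at L) \<and> 0 < y"
      using tail_profile_minorant_has_real_derivative tail_profile_minorant_derivative_pos[OF assms]
      by blast
  qed
qed

lemma tail_profile_excess_mono_on:
  assumes "0 \<le> lam"
  shows "mono_on {0..}
    (\<lambda>L. 2 * sqrt lam * sinh (L / 2) * (std_normal_cdf (sqrt (2 * lam * poisson_rate L)) - 1/2))"
proof (rule mono_onI)
  fix L1 L2 :: real
  assume "L1 \<in> {0..}" "L2 \<in> {0..}" "L1 \<le> L2"
  moreover have "std_normal_cdf (sqrt (2 * lam * poisson_rate L1))
      \<le> std_normal_cdf (sqrt (2 * lam * poisson_rate L2))"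
    using calculation assms poisson_rate_mono[of L1 L2]
    by (intro std_normal_cdf_mono real_sqrt_le_mono) (simp add: mult_left_mono)
  moreover have "1/2 \<le> std_normal_cdf (sqrt (2 * lam * poisson_rate L1))"
    using calculation assms poisson_rate_nonneg[of L1] by (intro std_normal_cdf_ge_half) simp
  ultimately show "2 * sqrt lam * sinh (L1 / 2) * (std_normal_cdf (sqrt (2 * lam * poisson_rate L1)) - 1/2)
      \<le> 2 * sqrt lam * sinh (L2 / 2) * (std_normal_cdf (sqrt (2 * lam * poisson_rate L2)) - 1/2)"
    using assms by (intro mult_mono) auto
qed

lemma tail_profile_strict_mono_on:
  assumes "36 \<le> lam"
  shows "strict_mono_on {0..} (tail_profile lam)"
proof (rule strict_mono_onI)
  fix L1 L2 :: real
  assume "L1 \<in> {0..}" "L2 \<in> {0..}" "L1 < L2"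
  then show "tail_profile lam L1 < tail_profile lam L2"
    using assms tail_profile_eq_minorant_plus[of lam]
      strict_mono_onD[OF tail_profile_minorant_strict_mono_on[OF assms]]
      mono_onD[OF tail_profile_excess_mono_on]
    by (smt (verit) atLeast_iff)
qed

lemma objective_eq_tail_profile:
  assumes "0 < lam" "0 \<le> \<beta>"
  defines "L \<equiv> ln (nn lam \<beta> / lam)"
  shows "rho lam \<beta> * std_normal_density (aa lam \<beta>) + gam lam \<beta> * std_normal_cdf (aa lam \<beta>)
    = tail_profile lam L"
proof -
  have "lam \<le> nn lam \<beta>"
    using assms by (simp add: nn_def)
  then have n: "nn lam \<beta> = lam * exp L"
    using assms by (simp add: L_def)
  have rho: "rho lam \<beta> = exp (- L)"
    using assms by (simp add: rho_def n exp_minus inverse_eq_divide)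
  have "- 2 * nn lam \<beta> * (1 - rho lam \<beta> + ln (rho lam \<beta>)) = 2 * lam * poisson_rate L"
    by (simp add: rho n poisson_rate_def algebra_simps flip: exp_add)
  then have aa: "aa lam \<beta> = sqrt (2 * lam * poisson_rate L)"
    by (simp add: aa_def)
  have "exp L = (exp (L / 2))\<^sup>2"
    by (simp flip: exp_double)
  then have sqrt_n: "sqrt (nn lam \<beta>) = sqrt lam * exp (L / 2)"
    by (simp add: n real_sqrt_mult)
  have sinh: "2 * sinh (L / 2) = (exp L - 1) / exp (L / 2)"
    using \<open>exp L = (exp (L / 2))\<^sup>2\<close>
    by (simp add: sinh_field_def exp_minus field_simps power2_eq_square)
  have "gam lam \<beta> = (lam * exp L - lam) / (sqrt lam * exp (L / 2))"
    unfolding gam_def sqrt_n by (simp add: n)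
  also have "\<dots> = lam / sqrt lam * ((exp L - 1) / exp (L / 2))"
    using assms(1) by (simp add: field_simps)
  also have "\<dots> = 2 * sqrt lam * sinh (L / 2)"
    using assms(1) unfolding sinh[symmetric] by (simp add: real_div_sqrt)
  finally have "gam lam \<beta> = 2 * sqrt lam * sinh (L / 2)" .
  then show ?thesis
    by (simp add: tail_profile_def rho aa)
qed

lemma log_ratio_nn_strict_mono_on:
  assumes "0 < lam"
  shows "strict_mono_on {0..} (\<lambda>\<beta>. ln (nn lam \<beta> / lam))"
  using assms
  by (intro strict_mono_onI) (simp add: nn_def add_pos_nonneg divide_strict_right_mono)

theorem lemma3:
  shows "\<exists>l0 > 0. \<forall>lam \<ge> l0.
     strict_mono_on {0<..}
       (\<lambda>\<beta>. rho lam \<beta> * std_normal_density (aa lam \<beta>)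
              + gam lam \<beta> * std_normal_cdf (aa lam \<beta>))"
proof (intro exI[of _ 36] conjI allI impI strict_mono_onI)
  fix lam \<beta>1 \<beta>2 :: real
  assume lam: "36 \<le> lam" and "\<beta>1 \<in> {0<..}" "\<beta>2 \<in> {0<..}" "\<beta>1 < \<beta>2"
  then have "ln (nn lam \<beta>1 / lam) < ln (nn lam \<beta>2 / lam)"
    using strict_mono_onD[OF log_ratio_nn_strict_mono_on] by simp
  moreover have "0 \<le> ln (nn lam \<beta>1 / lam)"
    using lam \<open>\<beta>1 \<in> {0<..}\<close> by (simp add: nn_def)
  ultimately show "rho lam \<beta>1 * std_normal_density (aa lam \<beta>1) + gam lam \<beta>1 * std_normal_cdf (aa lam \<beta>1)
      < rho lam \<beta>2 * std_normal_density (aa lam \<beta>2) + gam lam \<beta>2 * std_normal_cdf (aa lam \<beta>2)"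
    using lam \<open>\<beta>1 \<in> {0<..}\<close> \<open>\<beta>2 \<in> {0<..}\<close>
    by (simp add: objective_eq_tail_profile strict_mono_onD[OF tail_profile_strict_mono_on])
qed simp

end
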